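(* Let $n=3$, and let $(\mu,\Sigma)$ satisfy the normalization below, with $X\sim\mathcal{N}(\mu,\Sigma)$. For each $i\in\{1,2,3\}$, the quantity $\alpha_i$ defined below is identifiable from the three-way ranking probabilities. That is, suppose $(\mu',\Sigma')$ also satisfies the normalization, with associated quantities $\alpha'_i$. If $\Pr\{X_a\ge X_b\ge X_c\}=\Pr\{X'_a\ge X'_b\ge X'_c\}$ for all permutations $(a,b,c)$ of $\{1,2,3\}$, where $X'\sim\mathcal{N}(\mu',\Sigma')$, then $\alpha_i=\alpha'_i$ for $i=1,2,3$.
   Context: Normalization: $\mu \in \mathbb{R}^3$, $\Sigma \in \mathbb{R}^{3\times 3}$ symmetric positive semidefinite, $\langle\mu,\mathbf{1}\rangle=0$, $\Sigma\mathbf{1}=0$, $\operatorname{Tr}(\Sigma)=3$, and $\operatorname{rank}(\Sigma)=2$. Let $$P=\begin{bmatrix}1/\sqrt6&1/\sqrt6&-2/\sqrt6\\ 1/\sqrt2&-1/\sqrt2&0\end{bmatrix}$$ and $V=PX\sim\mathcal{N}(\dot\mu,\dot\Sigma)$, with $\dot\mu=P\mu$ and $\dot\Sigma=P\Sigma P^\top$. Let $c_1=(0,1)^\top$, $c_2=(\sqrt3/2,-1/2)^\top$, and $c_3=(\sqrt3/2,1/2)^\top$. Let $\dot\Sigma^{-1/2}$ be any $2\times2$ matrix with $\dot\Sigma^{-1/2}\dot\Sigma(\dot\Sigma^{-1/2})^\top=I$, and set $\dot\Sigma^{1/2}:=((\dot\Sigma^{-1/2})^{-1})^\top$. Define $\tilde\mu=\dot\Sigma^{-1/2}\dot\mu$,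 $\tilde c_i=\dot\Sigma^{1/2}c_i/\|\dot\Sigma^{1/2}c_i\|$, and $\alpha_i=\tilde c_i^\top\tilde\mu$. The value of $\alpha_i$ does not depend on the choice of $\dot\Sigma^{-1/2}$. *)

theory Defs
  imports "HOL-Analysis.Analysis" "HOL-Probability.Probability"
begin

definition std_gauss3 :: "(real^3) measure" where
  "std_gauss3 = density lborel (\<lambda>z. ennreal (\<Prod>i\<in>UNIV. std_normal_density (z$i)))"

text \<open>Multivariate normal N(mu,Sigma) (possibly degenerate): law of mu + A z with
  A A^T = Sigma and z standard Gaussian.\<close>
definition gauss3 :: "real^3 \<Rightarrow> real^3^3 \<Rightarrow> (real^3) measure" where
  "gauss3 \<mu> \<Sigma> = distr std_gauss3 borel
     (\<lambda>z. \<mu> + (SOME A :: real^3^3. A ** transpose A = \<Sigma>) *v z)"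

definition rank_prob :: "real^3 \<Rightarrow> real^3^3 \<Rightarrow> 3 \<Rightarrow> 3 \<Rightarrow> 3 \<Rightarrow> real" where
  "rank_prob \<mu> \<Sigma> a b c = measure (gauss3 \<mu> \<Sigma>) {x. x$a \<ge> x$b \<and> x$b \<ge> x$c}"

definition normalized :: "real^3 \<Rightarrow> real^3^3 \<Rightarrow> bool" where
  "normalized \<mu> \<Sigma> \<longleftrightarrow>
     transpose \<Sigma> = \<Sigma> \<and> (\<forall>x. 0 \<le> x \<bullet> (\<Sigma> *v x)) \<and>
     \<mu> \<bullet> (1::real^3) = 0 \<and> \<Sigma> *v (1::real^3) = 0 \<and>
     trace \<Sigma> = 3 \<and> rank \<Sigma> = 2"

definition Pmat :: "real^3^2" where
  "Pmat = vector [vector [1/sqrt 6, 1/sqrt 6, -2/sqrt 6],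
                  vector [1/sqrt 2, -1/sqrt 2, 0]]"

definition cvec :: "3 \<Rightarrow> real^2" where
  "cvec i = (if i = 1 then vector [0, 1]
             else if i = 2 then vector [sqrt 3/2, -1/2]
             else vector [sqrt 3/2, 1/2])"

definition alpha :: "real^3 \<Rightarrow> real^3^3 \<Rightarrow> 3 \<Rightarrow> real" where
  "alpha \<mu> \<Sigma> i =
     (let Sd = Pmat ** \<Sigma> ** transpose Pmat;
          W = (SOME W :: real^2^2. W ** Sd ** transpose W = mat 1);
          Sh = transpose (matrix_inv W);
          mut = W *v (Pmat *v \<mu>);
          ct = (1 / norm (Sh *v cvec i)) *\<^sub>R (Sh *v cvec i)
      in ct \<bullet> mut)"

end

(*
  Whitening cancels out of alpha: if c_i picks out the pair (a, b) (P^T c_i is a positive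
  multiple of e_a - e_b), then alpha_i is the standardized mean d.mu / sqrt (d^T Sigma d) of
  X_a - X_b = d.X, d = e_a - e_b. Since the kernel of Sigma is spanned by 1, d.X is normal with
  positive variance, so Pr{X_a >= X_b} = Phi(alpha_i). Ties have probability zero, hence
  Pr{X_a >= X_b} is the sum of the three ranking probabilities with a above b, and strict
  monotonicity of Phi recovers alpha_i.
*)
theory Submission
  imports Defs
begin

section \<open>Standard normal and standard Gaussian measures\<close>

definition std_normal :: "real measure" where
  "std_normal = density lborel std_normal_density"

lemma prob_space_std_normal: "prob_space std_normal"
  unfolding std_normal_def by (rule prob_space_normal_density) simp

lemma sets_std_normal [measurable_cong, simp]: "sets std_normal = sets borel"
  by (simp add: std_normal_def)

lemma null_sets_std_normal_iff: "A \<in> null_sets std_normal \<longleftrightarrow> A \<in> null_sets lborel"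
proof -
  have "(x \<in> A \<longrightarrow> std_normal_density x = 0) \<longleftrightarrow> x \<notin> A" for x
    using normal_density_pos[of 1 0 x] by auto
  then have "A \<in> null_sets std_normal \<longleftrightarrow> A \<in> sets borel \<and> (AE x in lborel. x \<notin> A)"
    unfolding std_normal_def by (subst null_sets_density_iff) simp_all
  also have "\<dots> \<longleftrightarrow> A \<in> null_sets lborel"
    by (auto simp: AE_iff_null_sets AE_not_in)
  finally show ?thesis .
qed

lemma measure_std_normal_atLeast_strict_antimono:
  assumes "s < t"
  shows "measure std_normal {t..} < measure std_normal {s..}"
proof -
  interpret prob_space std_normal by (rule prob_space_std_normal)
  have "{s..<t} \<notin> null_sets lborel"
    using assms by auto
  then have "measure std_normal {s..<t} \<noteq> 0"
    by (auto simp: null_sets_std_normal_iff[symmetric] emeasure_eq_measure)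
  moreover have "measure std_normal {s..} = measure std_normal {s..<t} + measure std_normal {t..}"
    using assms by (subst finite_measure_Union[symmetric]) (auto intro!: arg_cong[where f = prob])
  ultimately show ?thesis
    using measure_nonneg[of std_normal "{s..<t}"] by linarith
qed

lemma measure_std_normal_atLeast_inj:
  "measure std_normal {s..} = measure std_normal {t..} \<Longrightarrow> s = t"
  using measure_std_normal_atLeast_strict_antimono[of s t]
    measure_std_normal_atLeast_strict_antimono[of t s]
  by (cases s t rule: linorder_cases) auto

lemma PiM_lborel_density_prod:
  fixes f :: "real \<Rightarrow> ennreal" and I :: "'i set"
  assumes I: "finite I" and f [measurable]: "f \<in> borel_measurable borel"
    and prob: "prob_space (density lborel f)"
  shows "density (PiM I (\<lambda>_. lborel)) (\<lambda>x. \<Prod>i\<in>I. f (x i)) = PiM I (\<lambda>_. density lborel f)"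
proof (rule product_sigma_finite.PiM_eqI[OF _ I])
  show "product_sigma_finite (\<lambda>_::'i. density lborel f)"
    using prob_space_imp_sigma_finite[OF prob] by (simp add: product_sigma_finite_def)
  show "sets (density (PiM I (\<lambda>_. lborel)) (\<lambda>x. \<Prod>i\<in>I. f (x i))) = sets (PiM I (\<lambda>_. density lborel f))"
    by (simp cong: sets_PiM_cong)
next
  fix A assume A: "\<And>i. i \<in> I \<Longrightarrow> A i \<in> sets (density lborel f)"
  interpret lborel_product: product_sigma_finite "\<lambda>_::'i. lborel :: real measure"
    by (simp add: product_sigma_finite_def lborel.sigma_finite_measure_axioms)
  have "indicator (Pi\<^sub>E I A) x = (\<Prod>i\<in>I. indicator (A i) (x i) :: ennreal)"
    if "x \<in> space (PiM I (\<lambda>_. lborel))" for x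
    using that I by (auto simp: space_PiM PiE_def indicator_def Pi_iff intro!: prod.neutral)
  then have "emeasure (density (PiM I (\<lambda>_. lborel)) (\<lambda>x. \<Prod>i\<in>I. f (x i))) (Pi\<^sub>E I A)
      = (\<integral>\<^sup>+x. (\<Prod>i\<in>I. f (x i) * indicator (A i) (x i)) \<partial>PiM I (\<lambda>_. lborel))"
    using A I by (subst emeasure_density) (auto intro!: nn_integral_cong simp: prod.distrib)
  also have "\<dots> = (\<Prod>i\<in>I. emeasure (density lborel f) (A i))"
    using A I lborel_product.product_nn_integral_prod[where f="\<lambda>i y. f y * indicator (A i) y"]
    by (simp add: emeasure_density)
  finally show "emeasure (density (PiM I (\<lambda>_. lborel)) (\<lambda>x. \<Prod>i\<in>I. f (x i))) (Pi\<^sub>E I A)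
      = (\<Prod>i\<in>I. emeasure (density lborel f) (A i))" .
qed

definition std_gaussian :: "'a::euclidean_space measure" where
  "std_gaussian = density lborel (\<lambda>z. \<Prod>b\<in>Basis. ennreal (std_normal_density (z \<bullet> b)))"

lemma std_gaussian_eq_distr_PiM:
  "std_gaussian = distr (PiM Basis (\<lambda>_. std_normal)) borel (\<lambda>f. \<Sum>b\<in>Basis. f b *\<^sub>R b)"
proof -
  have "std_gaussian = distr (density (PiM Basis (\<lambda>_. lborel))
      (\<lambda>f. \<Prod>b\<in>Basis. ennreal (std_normal_density ((\<Sum>b'\<in>Basis. f b' *\<^sub>R b') \<bullet> b))))
      borel (\<lambda>f. \<Sum>b\<in>Basis. f b *\<^sub>R b)"
    unfolding std_gaussian_def by (subst lborel_eq) (rule density_distr; measurable)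
  also have "density (PiM Basis (\<lambda>_. lborel))
      (\<lambda>f. \<Prod>b\<in>Basis. ennreal (std_normal_density ((\<Sum>b'\<in>Basis. f b' *\<^sub>R b') \<bullet> b)))
    = density (PiM Basis (\<lambda>_. lborel)) (\<lambda>f. \<Prod>b\<in>Basis. ennreal (std_normal_density (f b)))"
    by (intro density_cong prod.cong) (auto simp: inner_sum_left inner_Basis if_distrib cong: if_cong)
  also have "\<dots> = PiM Basis (\<lambda>_. std_normal)"
    unfolding std_normal_def by (rule PiM_lborel_density_prod) (auto intro: prob_space_normal_density)
  finally show ?thesis .
qed

lemma prob_space_std_gaussian: "prob_space std_gaussian"
  unfolding std_gaussian_eq_distr_PiM
  by (intro prob_space.prob_space_distr prob_space_PiM prob_space_std_normal) measurable

lemma space_std_gaussian [simp]: "space std_gaussian = UNIV"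
  by (simp add: std_gaussian_def)

lemma sets_std_gaussian [measurable_cong, simp]: "sets std_gaussian = sets borel"
  by (simp add: std_gaussian_def)

lemma prod_Basis_vec: "(\<Prod>b\<in>(Basis :: (real^'n) set). f b) = (\<Prod>i\<in>UNIV. f (axis i 1))"
proof -
  have "(Basis :: (real^'n) set) = range (\<lambda>i. axis i 1)"
    by (auto simp: Basis_vec_def)
  moreover have "inj (\<lambda>i::'n. axis i (1::real))"
    by (simp add: inj_on_def axis_eq_axis)
  ultimately show ?thesis
    using prod.reindex[of "\<lambda>i::'n. axis i (1::real)" UNIV f] by (simp add: comp_def)
qed

lemma std_gauss3_eq_std_gaussian: "std_gauss3 = std_gaussian"
  unfolding std_gauss3_def std_gaussian_def prod_Basis_vec
  by (simp add: prod_ennreal cart_eq_inner_axis)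

lemma indep_vars_PiM_components:
  assumes "I \<noteq> {}" and M: "\<And>i. i \<in> I \<Longrightarrow> prob_space (M i)"
  shows "prob_space.indep_vars (PiM I M) M (\<lambda>i \<omega>. \<omega> i) I"
proof -
  interpret prob_space "PiM I M" by (rule prob_space_PiM[OF M])
  have "distr (PiM I M) (PiM I M) (\<lambda>\<omega>. \<lambda>i\<in>I. \<omega> i) = PiM I M"
    using distr_cong[of "PiM I M" "PiM I M" "PiM I M" "PiM I M" "\<lambda>\<omega>. \<lambda>i\<in>I. \<omega> i" "\<lambda>\<omega>. \<omega>"]
    by (simp add: space_PiM)
  moreover have "distr (PiM I M) (M i) (\<lambda>\<omega>. \<omega> i) = M i" if "i \<in> I" for i
    by (rule distr_PiM_component[OF M that])
  ultimately show ?thesis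
    using assms(1) by (subst indep_vars_iff_distr_eq_PiM') (auto cong: PiM_cong)
qed

lemma distributed_PiM_std_normal_weighted_sum:
  fixes c :: "'i \<Rightarrow> real"
  assumes I: "finite I" and c: "\<exists>i\<in>I. c i \<noteq> 0"
  shows "distributed (PiM I (\<lambda>_. std_normal)) lborel (\<lambda>x. \<Sum>i\<in>I. c i * x i)
           (normal_density 0 (sqrt (\<Sum>i\<in>I. (c i)\<^sup>2)))"
proof -
  let ?M = "PiM I (\<lambda>_. std_normal)"
  interpret prob_space ?M by (intro prob_space_PiM prob_space_std_normal)
  define J where "J = {i\<in>I. c i \<noteq> 0}"
  have J: "finite J" "J \<noteq> {}" "J \<subseteq> I"
    using I c by (auto simp: J_def)
  have "distributed ?M lborel (\<lambda>x. x i) std_normal_density" if "i \<in> I" for i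
  proof -
    have "distr ?M lborel (\<lambda>x. x i) = distr ?M std_normal (\<lambda>x. x i)"
      by (rule distr_cong) auto
    also have "\<dots> = std_normal"
      by (rule distr_PiM_component[OF prob_space_std_normal that])
    finally show ?thesis
      using that by (simp add: distributed_def std_normal_def)
  qed
  then have "distributed ?M lborel (\<lambda>x. c i * x i) (normal_density 0 \<bar>c i\<bar>)" if "i \<in> J" for i
    using normal_density_affine[of "\<lambda>x. x i" 0 1 "c i" 0] that by (simp add: J_def)
  moreover have "indep_vars (\<lambda>_. std_normal) (\<lambda>i x. x i) J"
    using indep_vars_PiM_components[of I "\<lambda>_. std_normal"] c prob_space_std_normal
    by (intro indep_vars_subset[OF _ J(3)]) auto
  then have "indep_vars (\<lambda>_. borel) (\<lambda>i x. c i * x i) J"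
    by (rule indep_vars_compose2) simp
  ultimately have "distributed ?M lborel (\<lambda>x. \<Sum>i\<in>J. c i * x i)
      (normal_density (\<Sum>i\<in>J. 0) (sqrt (\<Sum>i\<in>J. \<bar>c i\<bar>\<^sup>2)))"
    by (intro sum_indep_normal[OF J(1,2)]) (auto simp: J_def)
  moreover have "(\<Sum>i\<in>J. c i * x i) = (\<Sum>i\<in>I. c i * x i)" for x
    using I by (intro sum.mono_neutral_left) (auto simp: J_def)
  moreover have "(\<Sum>i\<in>J. \<bar>c i\<bar>\<^sup>2) = (\<Sum>i\<in>I. (c i)\<^sup>2)"
    unfolding power2_abs using I by (intro sum.mono_neutral_left) (auto simp: J_def)
  ultimately show ?thesis
    by simp
qed

lemma distr_std_gaussian_unit_projection:
  fixes w :: "'a::euclidean_space"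
  assumes "w \<noteq> 0"
  shows "distr std_gaussian borel (\<lambda>z. (w \<bullet> z) / norm w) = std_normal"
proof -
  let ?M = "PiM (Basis :: 'a set) (\<lambda>_. std_normal)"
  interpret prob_space ?M by (intro prob_space_PiM prob_space_std_normal)
  have inner_sum: "w \<bullet> (\<Sum>b\<in>Basis. f b *\<^sub>R b) = (\<Sum>b\<in>Basis. (w \<bullet> b) * f b)" for f
    by (simp add: inner_sum_right mult.commute)
  have norm_w: "norm w = sqrt (\<Sum>b\<in>Basis. (w \<bullet> b)\<^sup>2)"
    using euclidean_inner[of w w] by (simp add: norm_eq_sqrt_inner power2_eq_square)
  have "\<exists>b\<in>Basis. w \<bullet> b \<noteq> 0"
    using assms by (metis euclidean_all_zero_iff)
  then have "distributed ?M lborel (\<lambda>f. \<Sum>b\<in>Basis. (w \<bullet> b) * f b) (normal_density 0 (norm w))"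
    unfolding norm_w by (rule distributed_PiM_std_normal_weighted_sum[OF finite_Basis])
  then have "distributed ?M lborel (\<lambda>f. w \<bullet> (\<Sum>b\<in>Basis. f b *\<^sub>R b)) (normal_density 0 (norm w))"
    by (simp only: inner_sum)
  then have "distributed ?M lborel (\<lambda>f. (w \<bullet> (\<Sum>b\<in>Basis. f b *\<^sub>R b) - 0) / norm w) std_normal_density"
    using assms by (intro normal_standard_normal_convert[THEN iffD1]) auto
  then have "distr ?M borel (\<lambda>f. (w \<bullet> (\<Sum>b\<in>Basis. f b *\<^sub>R b)) / norm w) = std_normal"
    unfolding distributed_def std_normal_def by (simp cong: distr_cong)
  moreover have "distr std_gaussian borel (\<lambda>z. (w \<bullet> z) / norm w)
      = distr ?M borel (\<lambda>f. (w \<bullet> (\<Sum>b\<in>Basis. f b *\<^sub>R b)) / norm w)"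
    unfolding std_gaussian_eq_distr_PiM by (subst distr_distr) (measurable, simp add: comp_def)
  ultimately show ?thesis
    by simp
qed

lemma measure_std_gaussian_halfspace:
  fixes w :: "'a::euclidean_space"
  assumes "w \<noteq> 0"
  shows "measure std_gaussian {z. t \<le> w \<bullet> z} = measure std_normal {t / norm w..}"
proof -
  have "{z. t \<le> w \<bullet> z} = (\<lambda>z. (w \<bullet> z) / norm w) -` {t / norm w..}"
    using assms by (auto simp: divide_le_cancel)
  then show ?thesis
    using measure_distr[of "\<lambda>z. (w \<bullet> z) / norm w" std_gaussian borel "{t / norm w..}"] assms
    by (simp add: distr_std_gaussian_unit_projection)
qed

lemma null_sets_std_gaussian_hyperplane:
  fixes w :: "'a::euclidean_space"
  assumes "w \<noteq> 0"
  shows "{z. w \<bullet> z = t} \<in> null_sets std_gaussian"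
proof -
  have "{t / norm w} \<in> null_sets (distr std_gaussian borel (\<lambda>z. (w \<bullet> z) / norm w))"
    using assms by (auto simp: distr_std_gaussian_unit_projection null_sets_std_normal_iff)
  moreover have "(\<lambda>z. (w \<bullet> z) / norm w) -` {t / norm w} = {z. w \<bullet> z = t}"
    using assms by auto
  ultimately show ?thesis
    by (subst (asm) null_sets_distr_iff) auto
qed

lemma borel_measurable_affine:
  fixes \<mu> :: "real^'m" and A :: "real^'n^'m"
  shows "(\<lambda>z. \<mu> + A *v z) \<in> borel_measurable borel"
  by (intro borel_measurable_continuous_onI continuous_on_add continuous_on_const
      linear_continuous_on matrix_vector_mul_bounded_linear)

lemma
  fixes A :: "real^'n^'m" and \<mu> d :: "real^'m"
  assumes "transpose A *v d \<noteq> 0"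
  shows measure_affine_std_gaussian_halfspace:
      "measure (distr std_gaussian borel (\<lambda>z. \<mu> + A *v z)) {x. 0 \<le> d \<bullet> x}
         = measure std_normal {- (d \<bullet> \<mu>) / norm (transpose A *v d)..}"
    and null_sets_affine_std_gaussian_hyperplane:
      "{x. d \<bullet> x = 0} \<in> null_sets (distr std_gaussian borel (\<lambda>z. \<mu> + A *v z))"
proof -
  have meas: "(\<lambda>z. \<mu> + A *v z) \<in> measurable std_gaussian borel"
    by (simp add: measurable_cong_sets[OF sets_std_gaussian refl] borel_measurable_affine)
  have inner_affine: "d \<bullet> (\<mu> + A *v z) = d \<bullet> \<mu> + (transpose A *v d) \<bullet> z" for z
    by (simp add: inner_add_right dot_lmul_matrix)
  have "(\<lambda>z. \<mu> + A *v z) -` {x. 0 \<le> d \<bullet> x} = {z. - (d \<bullet> \<mu>) \<le> (transpose A *v d) \<bullet> z}"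
    by (auto simp: inner_affine)
  then show "measure (distr std_gaussian borel (\<lambda>z. \<mu> + A *v z)) {x. 0 \<le> d \<bullet> x}
      = measure std_normal {- (d \<bullet> \<mu>) / norm (transpose A *v d)..}"
    using measure_distr[OF meas, of "{x. 0 \<le> d \<bullet> x}"] measure_std_gaussian_halfspace[OF assms]
    by simp
  have "(\<lambda>z. \<mu> + A *v z) -` {x. d \<bullet> x = 0} = {z. (transpose A *v d) \<bullet> z = - (d \<bullet> \<mu>)}"
    by (auto simp: inner_affine)
  then show "{x. d \<bullet> x = 0} \<in> null_sets (distr std_gaussian borel (\<lambda>z. \<mu> + A *v z))"
    using null_sets_distr_iff[OF meas] null_sets_std_gaussian_hyperplane[OF assms] by simp
qed

section \<open>Rankings of three coordinates\<close>

lemma measure_le_eq_sum_rankings: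
  fixes M :: "(real^'n) measure"
  assumes "finite_measure M" and sets_M: "sets M = sets borel"
    and ties: "AE x in M. x$a \<noteq> x$c \<and> x$b \<noteq> x$c"
  shows "measure M {x. x$b \<le> x$a} = measure M {x. x$a \<ge> x$b \<and> x$b \<ge> x$c}
     + measure M {x. x$a \<ge> x$c \<and> x$c \<ge> x$b} + measure M {x. x$c \<ge> x$a \<and> x$a \<ge> x$b}"
proof -
  interpret finite_measure M by fact
  have meas: "{x::real^'n. x$i \<ge> x$j \<and> x$j \<ge> x$k} \<in> fmeasurable M" for i j k
    unfolding fmeasurable_eq_sets sets_M
    by (intro borel_closed closed_Collect_conj closed_Collect_le continuous_on_component continuous_on_id)
  have split: "{x::real^'n. x$b \<le> x$a} = ({x. x$a \<ge> x$b \<and> x$b \<ge> x$c} \<union> {x. x$a \<ge> x$c \<and> x$c \<ge> x$b})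
      \<union> {x. x$c \<ge> x$a \<and> x$a \<ge> x$b}"
    by auto
  have "measure M {x. x$b \<le> x$a} = measure M ({x. x$a \<ge> x$b \<and> x$b \<ge> x$c} \<union> {x. x$a \<ge> x$c \<and> x$c \<ge> x$b})
      + measure M {x. x$c \<ge> x$a \<and> x$a \<ge> x$b}"
    unfolding split
  proof (rule measure_Un_AE)
    show "AE x in M. x \<notin> {x. x$a \<ge> x$b \<and> x$b \<ge> x$c} \<union> {x. x$a \<ge> x$c \<and> x$c \<ge> x$b}
        \<or> x \<notin> {x. x$c \<ge> x$a \<and> x$a \<ge> x$b}"
      using ties by (rule eventually_mono) auto
  qed (rule fmeasurable.Un meas)+
  moreover have "measure M ({x. x$a \<ge> x$b \<and> x$b \<ge> x$c} \<union> {x. x$a \<ge> x$c \<and> x$c \<ge> x$b})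
      = measure M {x. x$a \<ge> x$b \<and> x$b \<ge> x$c} + measure M {x. x$a \<ge> x$c \<and> x$c \<ge> x$b}"
  proof (rule measure_Un_AE)
    show "AE x in M. x \<notin> {x. x$a \<ge> x$b \<and> x$b \<ge> x$c} \<or> x \<notin> {x. x$a \<ge> x$c \<and> x$c \<ge> x$b}"
      using ties by (rule eventually_mono) auto
  qed (rule meas)+
  ultimately show ?thesis
    by simp
qed

section \<open>Factorizations of covariance matrices\<close>

lemma psd_quadratic_form_eq_0_imp_kernel:
  fixes S :: "real^'n^'n"
  assumes sym: "transpose S = S" and psd: "\<forall>x. 0 \<le> x \<bullet> (S *v x)"
    and zero: "x \<bullet> (S *v x) = 0"
  shows "S *v x = 0"
proof (rule ccontr)
  define y where "y = S *v x"
  assume "S *v x \<noteq> 0"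
  then have y_pos: "0 < y \<bullet> y"
    by (simp add: y_def)
  define c where "c = y \<bullet> (S *v y)"
  have "0 \<le> c"
    using psd by (simp add: c_def)
  define t where "t = (y \<bullet> y) / (c + 1)"
  have "0 < t"
    using y_pos \<open>0 \<le> c\<close> by (simp add: t_def)
  have "x \<bullet> (S *v y) = y \<bullet> y"
    using sym by (metis dot_lmul_matrix inner_commute vector_transpose_matrix y_def)
  then have "(x - t *\<^sub>R y) \<bullet> (S *v (x - t *\<^sub>R y)) = t * (t * c - 2 * (y \<bullet> y))"
    using zero by (simp add: matrix_vector_mult_diff_distrib matrix_vector_mult_scaleR inner_diff_left
        inner_diff_right inner_commute[of y x] c_def y_def algebra_simps)
  also have "\<dots> < 0"
  proof -
    have "c / (c + 1) < 2"
      using \<open>0 \<le> c\<close> by (simp add: field_simps)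
    then have "c / (c + 1) * (y \<bullet> y) < 2 * (y \<bullet> y)"
      using y_pos by (rule mult_strict_right_mono)
    then have "t * c < 2 * (y \<bullet> y)"
      by (simp add: t_def mult.commute)
    with \<open>0 < t\<close> show ?thesis
      by (simp add: mult_pos_neg)
  qed
  finally show False
    using psd by (metis not_le)
qed

lemma kernel_orthogonal_eq_0_if_rank_ge_2:
  fixes S :: "real^3^3"
  assumes rank: "2 \<le> rank S" and u: "S *v u = 0" "u \<noteq> 0"
    and v: "S *v v = 0" "u \<bullet> v = 0"
  shows "v = 0"
proof (rule ccontr)
  assume "v \<noteq> 0"
  \<comment> \<open>\<open>u\<close>, \<open>v\<close> and \<open>u \<times> v\<close> span \<open>\<real>\<^sup>3\<close>, so the range of \<open>S\<close> is spanned by \<open>S (u \<times> v)\<close>.\<close>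
  define w where "w = cross3 u v"
  have "(norm w)\<^sup>2 = (norm u * norm v)\<^sup>2"
    using norm_cross_dot[of u v] v(2) by (simp add: w_def)
  then have "w \<noteq> 0"
    using u(2) \<open>v \<noteq> 0\<close> by auto
  let ?B = "{u, v, w}"
  have "pairwise orthogonal ?B"
    using v(2) by (auto simp: pairwise_def orthogonal_def inner_commute w_def dot_cross_self)
  then have "independent ?B"
    using u(2) \<open>v \<noteq> 0\<close> \<open>w \<noteq> 0\<close> by (intro pairwise_orthogonal_independent) auto
  moreover have "u \<noteq> v" "u \<noteq> w" "v \<noteq> w"
    using u(2) v(2) \<open>v \<noteq> 0\<close> by (metis cross_eq_self inner_eq_zero_iff w_def)+
  then have "card ?B = 3"
    by simp
  ultimately have "UNIV \<subseteq> span ?B"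
    by (intro card_ge_dim_independent) auto
  then have "range (\<lambda>x. S *v x) = (\<lambda>x. S *v x) ` span ?B"
    by auto
  also have "\<dots> = span ((\<lambda>x. S *v x) ` ?B)"
    by (rule span_linear_image[OF matrix_vector_mul_linear, symmetric])
  also have "(\<lambda>x. S *v x) ` ?B = {0, S *v w}"
    using u(1) v(1) by auto
  finally have "rank S = dim (span {S *v w})"
    by (simp add: rank_dim_range)
  then have "rank S \<le> 1"
    using dim_le_card[of "span {S *v w}" "{S *v w}"] by simp
  with rank show False
    by simp
qed

lemma norm_transpose_mult_factor:
  fixes A :: "real^'m^'n"
  assumes "A ** transpose A = S"
  shows "norm (transpose A *v d) = sqrt (d \<bullet> (S *v d))"
  by (simp add: norm_eq_sqrt_inner dot_lmul_matrix matrix_vector_mul_assoc[symmetric] assms[symmetric])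

lemma matrix_inv_left:
  fixes A :: "'a::field^'n^'n"
  assumes "invertible A"
  shows "matrix_inv A ** A = mat 1"
  using assms unfolding invertible_def matrix_inv_def by (rule someI_ex[THEN conjunct2])

lemma ex_whitening_if_factorization:
  fixes L D :: "real^'n^'n"
  assumes L: "L ** transpose L = D" and pos: "\<And>x. x \<noteq> 0 \<Longrightarrow> 0 < x \<bullet> (D *v x)"
  shows "\<exists>W::real^'n^'n. W ** D ** transpose W = mat 1"
proof -
  have "x \<bullet> (D *v x) = (transpose L *v x) \<bullet> (transpose L *v x)" for x
    by (simp add: L[symmetric] dot_lmul_matrix matrix_vector_mul_assoc[symmetric])
  then have "inj ((*v) (transpose L))"
    using pos by (metis inner_zero_left less_irrefl linear_injective_0 matrix_vector_mul_linear)
  then obtain B :: "real^'n^'n" where "B ** transpose L = mat 1"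
    using matrix_left_invertible_injective by blast
  then have "transpose B ** L = mat 1"
    by (metis matrix_transpose_mul transpose_mat transpose_transpose matrix_left_right_inverse)
  then have "transpose B ** D ** transpose (transpose B) = mat 1"
    by (metis L matrix_mul_assoc matrix_mul_rid matrix_transpose_mul transpose_mat)
  then show ?thesis
    by blast
qed

lemma
  fixes W D :: "real^'n^'n"
  assumes W: "W ** D ** transpose W = mat 1"
  shows inner_whitening_dual: "(c v* matrix_inv W) \<bullet> (W *v y) = c \<bullet> y"
    and norm_whitening_dual: "norm (c v* matrix_inv W) = sqrt (c \<bullet> (D *v c))"
proof -
  define V where "V = matrix_inv W"
  have "W ** (D ** transpose W) = mat 1"
    using W by (simp add: matrix_mul_assoc)
  then have "invertible W"
    using invertible_def matrix_left_right_inverse by blast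
  then have VW: "V ** W = mat 1"
    by (simp add: V_def matrix_inv_left)
  have "D = (V ** W) ** D ** transpose (V ** W)"
    by (simp add: VW)
  also have "\<dots> = V ** (W ** D ** transpose W) ** transpose V"
    by (simp add: matrix_transpose_mul matrix_mul_assoc)
  also have "\<dots> = V ** transpose V"
    using W by simp
  finally have VV: "V ** transpose V = D" ..
  show "(c v* matrix_inv W) \<bullet> (W *v y) = c \<bullet> y"
    by (simp add: V_def[symmetric] dot_lmul_matrix matrix_vector_mul_assoc VW)
  show "norm (c v* matrix_inv W) = sqrt (c \<bullet> (D *v c))"
    using norm_transpose_mult_factor[OF VV, of c] by (simp add: V_def)
qed

lemma cholesky_2x2:
  fixes D :: "real^2^2"
  assumes sym: "transpose D = D" and pos: "\<And>x. x \<noteq> 0 \<Longrightarrow> 0 < x \<bullet> (D *v x)"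
  obtains L :: "real^2^2" where "L ** transpose L = D"
proof -
  define p q r where "p = D$1$1" and "q = D$1$2" and "r = D$2$2"
  have "D$2$1 = q"
    using arg_cong[OF sym, of "\<lambda>M. M$1$2"] by (simp add: transpose_def q_def)
  then have D: "D$1$1 = p" "D$1$2 = q" "D$2$1 = q" "D$2$2 = r"
    by (simp_all add: p_def q_def r_def)
  have "axis 1 1 \<noteq> (0::real^2)"
    by (simp add: axis_eq_0_iff)
  from pos[OF this] have "0 < p"
    by (simp add: D inner_vec_def matrix_vector_mult_def axis_def sum_2)
  moreover have "0 < p * (p * r - q * q)"
    using pos[of "vector [q, -p]"] \<open>0 < p\<close>
    by (simp add: D vec_eq_iff forall_2 inner_vec_def matrix_vector_mult_def sum_2 algebra_simps)
  ultimately have "0 \<le> r - q * q / p"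
    by (simp add: zero_less_mult_iff field_simps)
  define s u where "s = sqrt p" and "u = sqrt (r - q * q / p)"
  have "s * s = p" "u * u = r - q * q / p" "s \<noteq> 0"
    using \<open>0 < p\<close> \<open>0 \<le> r - q * q / p\<close> by (simp_all add: s_def u_def)
  define L :: "real^2^2"
    where "L = (\<chi> i j. if i = 1 then (if j = 1 then s else 0) else (if j = 1 then q / s else u))"
  have "p * (u * u) = p * r - q * q"
    using \<open>u * u = r - q * q / p\<close> \<open>0 < p\<close> by (simp add: field_simps)
  then have "L ** transpose L = D"
    using \<open>s * s = p\<close> \<open>s \<noteq> 0\<close>
    by (simp add: L_def vec_eq_iff forall_2 matrix_matrix_mult_def transpose_def sum_2 D field_simps)
      (metis mult.assoc)
  then show thesis
    by (rule that)
qed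

section \<open>Identifiability in the three-item ranking model\<close>

definition standardized_mean :: "real^'n \<Rightarrow> real^'n^'n \<Rightarrow> real^'n \<Rightarrow> real" where
  "standardized_mean \<mu> \<Sigma> d = (d \<bullet> \<mu>) / sqrt (d \<bullet> (\<Sigma> *v d))"

lemma standardized_mean_scaleR:
  assumes "0 < t"
  shows "standardized_mean \<mu> \<Sigma> (t *\<^sub>R d) = standardized_mean \<mu> \<Sigma> d"
proof -
  have "sqrt ((t *\<^sub>R d) \<bullet> (\<Sigma> *v (t *\<^sub>R d))) = t * sqrt (d \<bullet> (\<Sigma> *v d))"
    using assms by (simp add: matrix_vector_mult_scaleR real_sqrt_mult mult.assoc[symmetric])
  then show ?thesis
    using assms by (simp add: standardized_mean_def)
qed

lemma inner_axis_diff: "(axis a 1 - axis b 1) \<bullet> x = x$a - x$b"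
  by (simp add: inner_diff_left inner_axis')

lemma Pmat_nth:
  "Pmat $ 1 $ 1 = 1 / sqrt 6" "Pmat $ 1 $ 2 = 1 / sqrt 6" "Pmat $ 1 $ 3 = - 2 / sqrt 6"
  "Pmat $ 2 $ 1 = 1 / sqrt 2" "Pmat $ 2 $ 2 = - 1 / sqrt 2" "Pmat $ 2 $ 3 = 0"
  by (simp_all add: Pmat_def)

lemma cvec_nth:
  "cvec 1 $ 1 = 0" "cvec 1 $ 2 = 1" "cvec 2 $ 1 = sqrt 3 / 2" "cvec 2 $ 2 = - 1 / 2"
  "cvec 3 $ 1 = sqrt 3 / 2" "cvec 3 $ 2 = 1 / 2"
  by (simp_all add: cvec_def)

lemma sqrt_6_eq: "sqrt 6 = sqrt 2 * sqrt 3"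
  by (simp add: real_sqrt_mult[symmetric])

lemma real_sqrt_mult_self_left: "0 \<le> a \<Longrightarrow> sqrt a * (sqrt a * y) = a * y"
  by (simp add: mult.assoc[symmetric])

lemma Pmat_mult_transpose: "Pmat ** transpose Pmat = mat 1"
  by (simp add: vec_eq_iff forall_2 matrix_matrix_mult_def transpose_def mat_def sum_3 Pmat_nth
      sqrt_6_eq real_sqrt_mult_self_left field_simps)

lemma transpose_Pmat_mult_Pmat: "(transpose Pmat ** Pmat) *v x = x - ((x \<bullet> 1) / 3) *\<^sub>R 1"
  by (simp add: vec_eq_iff forall_3 matrix_matrix_mult_def matrix_vector_mult_def transpose_def
      sum_2 sum_3 Pmat_nth inner_vec_def sqrt_6_eq real_sqrt_mult_self_left field_simps)

lemma Pmat_one: "Pmat *v 1 = 0"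
  by (simp add: vec_eq_iff forall_2 matrix_vector_mult_def sum_3 Pmat_nth)

lemma transpose_Pmat_cvec:
  "transpose Pmat *v cvec 1 = (1 / sqrt 2) *\<^sub>R (axis 1 1 - axis 2 1)"
  "transpose Pmat *v cvec 2 = (1 / sqrt 2) *\<^sub>R (axis 2 1 - axis 3 1)"
  "transpose Pmat *v cvec 3 = (1 / sqrt 2) *\<^sub>R (axis 1 1 - axis 3 1)"
  by (simp_all add: vec_eq_iff forall_3 matrix_vector_mult_def transpose_def axis_def sum_2
      Pmat_nth cvec_nth sqrt_6_eq real_sqrt_mult_self_left field_simps)

lemma transpose_Pmat_cvec_axis_diff:
  obtains a b where "a \<noteq> b" "transpose Pmat *v cvec i = (1 / sqrt 2) *\<^sub>R (axis a 1 - axis b 1)"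
proof -
  consider "i = 1" | "i = 2" | "i = 3"
    using exhaust_3 by blast
  then show thesis
  proof cases
    case 1
    then show ?thesis using that[of 1 2] transpose_Pmat_cvec(1) by simp
  next
    case 2
    then show ?thesis using that[of 2 3] transpose_Pmat_cvec(2) by simp
  next
    case 3
    then show ?thesis using that[of 1 3] transpose_Pmat_cvec(3) by simp
  qed
qed

lemma normalized_quadratic_form_pos:
  assumes N: "normalized \<mu> \<Sigma>" and "v \<bullet> 1 = 0" and "v \<noteq> 0"
  shows "0 < v \<bullet> (\<Sigma> *v v)"
proof -
  have "(1::real^3) \<noteq> 0"
    by (simp add: vec_eq_iff)
  then have "\<Sigma> *v v \<noteq> 0"
    using N assms(2,3) kernel_orthogonal_eq_0_if_rank_ge_2[of \<Sigma> 1 v]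
    by (auto simp: normalized_def inner_commute)
  then have "v \<bullet> (\<Sigma> *v v) \<noteq> 0"
    using N psd_quadratic_form_eq_0_imp_kernel[of \<Sigma> v] by (auto simp: normalized_def)
  moreover have "0 \<le> v \<bullet> (\<Sigma> *v v)"
    using N by (simp add: normalized_def)
  ultimately show ?thesis
    by simp
qed

lemma normalized_lift_projected_cov:
  assumes N: "normalized \<mu> \<Sigma>"
  shows "transpose Pmat ** (Pmat ** \<Sigma> ** transpose Pmat) ** Pmat = \<Sigma>"
proof -
  have sym: "transpose \<Sigma> = \<Sigma>" and one: "\<Sigma> *v 1 = 0"
    using N by (simp_all add: normalized_def)
  have "(\<Sigma> *v x) \<bullet> 1 = 0" for x
    using sym one by (metis dot_lmul_matrix inner_zero_right vector_transpose_matrix)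
  then have "(transpose Pmat ** Pmat) *v (\<Sigma> *v ((transpose Pmat ** Pmat) *v x)) = \<Sigma> *v x" for x
    using one by (simp add: transpose_Pmat_mult_Pmat matrix_vector_mult_diff_distrib matrix_vector_mult_scaleR)
  then show ?thesis
    by (simp add: matrix_eq matrix_vector_mul_assoc[symmetric] matrix_mul_assoc)
qed

lemma normalized_projected_cov_pos:
  assumes N: "normalized \<mu> \<Sigma>" and "x \<noteq> 0"
  shows "0 < x \<bullet> ((Pmat ** \<Sigma> ** transpose Pmat) *v x)"
proof -
  define v where "v = transpose Pmat *v x"
  have "x \<bullet> ((Pmat ** \<Sigma> ** transpose Pmat) *v x) = v \<bullet> (\<Sigma> *v v)"
    by (simp add: v_def matrix_vector_mul_assoc[symmetric] dot_lmul_matrix[symmetric])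
  moreover have "v \<bullet> 1 = 0"
    by (simp add: v_def dot_lmul_matrix Pmat_one)
  moreover have "Pmat *v v = x"
    by (simp only: v_def matrix_vector_mul_assoc Pmat_mult_transpose matrix_vector_mul_lid)
  then have "v \<noteq> 0"
    using assms(2) by auto
  ultimately show ?thesis
    using normalized_quadratic_form_pos[OF N] by simp
qed

lemma normalized_factorizations:
  assumes N: "normalized \<mu> \<Sigma>"
  shows "\<exists>A::real^3^3. A ** transpose A = \<Sigma>"
    and "\<exists>W::real^2^2. W ** (Pmat ** \<Sigma> ** transpose Pmat) ** transpose W = mat 1"
proof -
  have sym: "transpose (Pmat ** \<Sigma> ** transpose Pmat) = Pmat ** \<Sigma> ** transpose Pmat"
    using N by (simp add: normalized_def matrix_transpose_mul matrix_mul_assoc)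
  obtain L :: "real^2^2" where L: "L ** transpose L = Pmat ** \<Sigma> ** transpose Pmat"
    by (rule cholesky_2x2[OF sym normalized_projected_cov_pos[OF N]])
  then show "\<exists>W::real^2^2. W ** (Pmat ** \<Sigma> ** transpose Pmat) ** transpose W = mat 1"
    using normalized_projected_cov_pos[OF N] by (rule ex_whitening_if_factorization)
  have "(transpose Pmat ** L ** Pmat) ** transpose (transpose Pmat ** L ** Pmat)
      = transpose Pmat ** (L ** (Pmat ** transpose Pmat) ** transpose L) ** Pmat"
    by (simp add: matrix_transpose_mul matrix_mul_assoc)
  also have "\<dots> = \<Sigma>"
    using normalized_lift_projected_cov[OF N] by (simp add: Pmat_mult_transpose L)
  finally show "\<exists>A::real^3^3. A ** transpose A = \<Sigma>"
    by blast
qed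

lemma alpha_eq_standardized_mean:
  assumes "\<exists>W::real^2^2. W ** (Pmat ** \<Sigma> ** transpose Pmat) ** transpose W = mat 1"
  shows "alpha \<mu> \<Sigma> i = standardized_mean \<mu> \<Sigma> (transpose Pmat *v cvec i)"
proof -
  define W where "W = (SOME W :: real^2^2. W ** (Pmat ** \<Sigma> ** transpose Pmat) ** transpose W = mat 1)"
  have W: "W ** (Pmat ** \<Sigma> ** transpose Pmat) ** transpose W = mat 1"
    unfolding W_def by (rule someI_ex[OF assms])
  define h where "h = cvec i v* matrix_inv W"
  have "alpha \<mu> \<Sigma> i = ((1 / norm h) *\<^sub>R h) \<bullet> (W *v (Pmat *v \<mu>))"
    by (simp add: alpha_def Let_def W_def h_def)
  also have "\<dots> = (cvec i \<bullet> (Pmat *v \<mu>)) / sqrt (cvec i \<bullet> ((Pmat ** \<Sigma> ** transpose Pmat) *v cvec i))"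
    by (simp add: h_def inner_whitening_dual[OF W] norm_whitening_dual[OF W])
  also have "\<dots> = standardized_mean \<mu> \<Sigma> (transpose Pmat *v cvec i)"
    by (simp add: standardized_mean_def dot_lmul_matrix matrix_vector_mul_assoc[symmetric])
  finally show ?thesis .
qed

lemma gauss3_eq_distr_std_gaussian:
  assumes "\<exists>A::real^3^3. A ** transpose A = \<Sigma>"
  obtains A :: "real^3^3"
  where "A ** transpose A = \<Sigma>" and "gauss3 \<mu> \<Sigma> = distr std_gaussian borel (\<lambda>z. \<mu> + A *v z)"
proof -
  define A where "A = (SOME A :: real^3^3. A ** transpose A = \<Sigma>)"
  have "A ** transpose A = \<Sigma>"
    unfolding A_def by (rule someI_ex[OF assms])
  moreover have "gauss3 \<mu> \<Sigma> = distr std_gaussian borel (\<lambda>z. \<mu> + A *v z)"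
    by (simp add: gauss3_def A_def std_gauss3_eq_std_gaussian)
  ultimately show thesis
    by (rule that)
qed

lemma sets_gauss3 [measurable_cong, simp]: "sets (gauss3 \<mu> \<Sigma>) = sets borel"
  by (simp add: gauss3_def)

lemma prob_space_gauss3:
  assumes "\<exists>A::real^3^3. A ** transpose A = \<Sigma>"
  shows "prob_space (gauss3 \<mu> \<Sigma>)"
proof -
  obtain A :: "real^3^3" where "gauss3 \<mu> \<Sigma> = distr std_gaussian borel (\<lambda>z. \<mu> + A *v z)"
    using gauss3_eq_distr_std_gaussian[OF assms] .
  moreover have "(\<lambda>z. \<mu> + A *v z) \<in> borel_measurable std_gaussian"
    by (simp add: measurable_cong_sets[OF sets_std_gaussian refl] borel_measurable_affine)
  ultimately show ?thesis
    using prob_space.prob_space_distr[OF prob_space_std_gaussian] by simp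
qed

lemma
  assumes fac: "\<exists>A::real^3^3. A ** transpose A = \<Sigma>" and var: "0 < d \<bullet> (\<Sigma> *v d)"
  shows prob_gauss3_halfspace:
      "measure (gauss3 \<mu> \<Sigma>) {x. 0 \<le> d \<bullet> x} = measure std_normal {- standardized_mean \<mu> \<Sigma> d..}"
    and null_sets_gauss3_hyperplane: "{x. d \<bullet> x = 0} \<in> null_sets (gauss3 \<mu> \<Sigma>)"
proof -
  obtain A :: "real^3^3" where A: "A ** transpose A = \<Sigma>"
    and gauss3_eq: "gauss3 \<mu> \<Sigma> = distr std_gaussian borel (\<lambda>z. \<mu> + A *v z)"
    by (rule gauss3_eq_distr_std_gaussian[OF fac])
  have norm_eq: "norm (transpose A *v d) = sqrt (d \<bullet> (\<Sigma> *v d))"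
    by (rule norm_transpose_mult_factor[OF A])
  then have "transpose A *v d \<noteq> 0"
    using var by auto
  from measure_affine_std_gaussian_halfspace[OF this, unfolded norm_eq]
    null_sets_affine_std_gaussian_hyperplane[OF this]
  show "measure (gauss3 \<mu> \<Sigma>) {x. 0 \<le> d \<bullet> x} = measure std_normal {- standardized_mean \<mu> \<Sigma> d..}"
    and "{x. d \<bullet> x = 0} \<in> null_sets (gauss3 \<mu> \<Sigma>)"
    by (simp_all add: gauss3_eq standardized_mean_def)
qed

lemma
  assumes N: "normalized \<mu> \<Sigma>" and "a \<noteq> b"
  shows normalized_prob_pairwise_order: "measure (gauss3 \<mu> \<Sigma>) {x. x$b \<le> x$a}
      = measure std_normal {- standardized_mean \<mu> \<Sigma> (axis a 1 - axis b 1)..}"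
    and normalized_gauss3_no_ties: "AE x in gauss3 \<mu> \<Sigma>. x$a \<noteq> x$b"
proof -
  let ?d = "axis a 1 - axis b 1 :: real^3"
  have "?d \<bullet> axis a 1 = 1"
    using \<open>a \<noteq> b\<close> by (simp add: inner_axis_diff) (simp add: axis_def)
  then have "?d \<noteq> 0"
    by auto
  moreover have "?d \<bullet> 1 = 0"
    by (simp add: inner_axis_diff)
  ultimately have var: "0 < ?d \<bullet> (\<Sigma> *v ?d)"
    by (rule normalized_quadratic_form_pos[OF N, rotated])
  have fac: "\<exists>A::real^3^3. A ** transpose A = \<Sigma>"
    by (rule normalized_factorizations(1)[OF N])
  show "measure (gauss3 \<mu> \<Sigma>) {x. x$b \<le> x$a}
      = measure std_normal {- standardized_mean \<mu> \<Sigma> ?d..}"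
    using prob_gauss3_halfspace[OF fac var] by (simp add: inner_axis_diff)
  show "AE x in gauss3 \<mu> \<Sigma>. x$a \<noteq> x$b"
    using AE_not_in[OF null_sets_gauss3_hyperplane[OF fac var]] by (simp add: inner_axis_diff)
qed

lemma normalized_prob_pairwise_order_eq_sum_rank_prob:
  assumes N: "normalized \<mu> \<Sigma>" and "a \<noteq> b" "b \<noteq> c" "a \<noteq> c"
  shows "measure (gauss3 \<mu> \<Sigma>) {x. x$b \<le> x$a}
      = rank_prob \<mu> \<Sigma> a b c + rank_prob \<mu> \<Sigma> a c b + rank_prob \<mu> \<Sigma> c a b"
proof -
  interpret prob_space "gauss3 \<mu> \<Sigma>"
    by (rule prob_space_gauss3[OF normalized_factorizations(1)[OF N]])
  have "AE x in gauss3 \<mu> \<Sigma>. x$a \<noteq> x$c \<and> x$b \<noteq> x$c"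
    using normalized_gauss3_no_ties[OF N] assms(3,4) by (simp add: eventually_conj_iff)
  then show ?thesis
    unfolding rank_prob_def by (rule measure_le_eq_sum_rankings[OF finite_measure_axioms sets_gauss3])
qed

lemma normalized_standardized_mean_identifiable:
  assumes N: "normalized \<mu> \<Sigma>" and N': "normalized \<mu>' \<Sigma>'"
    and R: "\<And>a b c. a \<noteq> b \<Longrightarrow> b \<noteq> c \<Longrightarrow> a \<noteq> c \<Longrightarrow> rank_prob \<mu> \<Sigma> a b c = rank_prob \<mu>' \<Sigma>' a b c"
    and "a \<noteq> b"
  shows "standardized_mean \<mu> \<Sigma> (axis a 1 - axis b 1) = standardized_mean \<mu>' \<Sigma>' (axis a 1 - axis b 1)"
proof -
  have "card {a, b} < CARD(3)"
    by (simp add: card_insert_if)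
  then obtain c :: 3 where "c \<notin> {a, b}"
    by (metis UNIV_I card_mono finite subsetI not_le)
  then have distinct: "a \<noteq> b" "b \<noteq> c" "a \<noteq> c" "c \<noteq> a" "c \<noteq> b"
    using \<open>a \<noteq> b\<close> by auto
  have "measure (gauss3 \<mu> \<Sigma>) {x. x$b \<le> x$a}
      = rank_prob \<mu> \<Sigma> a b c + rank_prob \<mu> \<Sigma> a c b + rank_prob \<mu> \<Sigma> c a b"
    by (rule normalized_prob_pairwise_order_eq_sum_rank_prob[OF N distinct(1-3)])
  also have "\<dots> = rank_prob \<mu>' \<Sigma>' a b c + rank_prob \<mu>' \<Sigma>' a c b + rank_prob \<mu>' \<Sigma>' c a b"
    using distinct by (simp add: R)
  also have "\<dots> = measure (gauss3 \<mu>' \<Sigma>') {x. x$b \<le> x$a}"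
    by (rule normalized_prob_pairwise_order_eq_sum_rank_prob[OF N' distinct(1-3), symmetric])
  finally have "measure (gauss3 \<mu> \<Sigma>) {x. x$b \<le> x$a} = measure (gauss3 \<mu>' \<Sigma>') {x. x$b \<le> x$a}" .
  then have "- standardized_mean \<mu> \<Sigma> (axis a 1 - axis b 1) = - standardized_mean \<mu>' \<Sigma>' (axis a 1 - axis b 1)"
    unfolding normalized_prob_pairwise_order[OF N \<open>a \<noteq> b\<close>] normalized_prob_pairwise_order[OF N' \<open>a \<noteq> b\<close>]
    by (rule measure_std_normal_atLeast_inj)
  then show ?thesis
    by simp
qed

theorem lemma1:
  fixes \<mu> \<mu>' :: "real^3" and \<Sigma> \<Sigma>' :: "real^3^3"
  assumes "normalized \<mu> \<Sigma>" and "normalized \<mu>' \<Sigma>'"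
    and "\<And>a b c. a \<noteq> b \<Longrightarrow> b \<noteq> c \<Longrightarrow> a \<noteq> c \<Longrightarrow>
           rank_prob \<mu> \<Sigma> a b c = rank_prob \<mu>' \<Sigma>' a b c"
  shows "\<forall>i::3. alpha \<mu> \<Sigma> i = alpha \<mu>' \<Sigma>' i"
proof
  fix i :: 3
  obtain a b where "a \<noteq> b" and dir: "transpose Pmat *v cvec i = (1 / sqrt 2) *\<^sub>R (axis a 1 - axis b 1)"
    by (rule transpose_Pmat_cvec_axis_diff)
  have alpha_eq: "alpha m S i = standardized_mean m S (axis a 1 - axis b 1)" if "normalized m S" for m S
    using alpha_eq_standardized_mean[OF normalized_factorizations(2)[OF that]] dir
    by (simp add: standardized_mean_scaleR)
  show "alpha \<mu> \<Sigma> i = alpha \<mu>' \<Sigma>' i"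
    using normalized_standardized_mean_identifiable[OF assms \<open>a \<noteq> b\<close>]
    by (simp add: alpha_eq assms(1,2))
qed

end
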